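(* Consider the following single-beam millimeter-wave downlink model. Fix an integer $M\ge 1$, parameters $\alpha>0$, $\phi>0$, $\lambda>0$, $R_{\mathcal{D}}>0$, $\Delta>0$ and a beam direction $\bar{\theta}\in\mathbb{R}$. For $\theta\in\mathbb{R}$ let $\mathbf{a}(\theta)=\frac{1}{\sqrt{M}}\big(1,e^{-\mathrm{j}\pi\theta},\dots,e^{-\mathrm{j}\pi(M-1)\theta}\big)^T$ and let the beamformer be $\mathbf{p}=\mathbf{a}(\bar{\theta})$. Let $\mathcal{D}_{\theta}=\{(r,\theta): 0\le r\le R_{\mathcal{D}},\ \bar{\theta}-\Delta\le\theta\le\bar{\theta}+\Delta\}$ (polar coordinates, the angular coordinate of a user being identified with the normalized direction of its channel). Suppose that, conditioned on there being exactly $K\ge 1$ users in $\mathcal{D}_{\theta}$, the users' polar positions $(r_k,\theta_k)$, $k=1,\dots,K$, are i.i.d. with density $\frac{\phi^{2}e^{-\phi r}}{2\Delta\,\gamma(2,R_{\mathcal{D}}\phi)}\,r$ with respect to $dr\,d\theta$ on $[0,R_{\mathcal{D}}]\times[\bar{\theta}-\Delta,\bar{\theta}+\Delta]$ (this is the conditional law of a Poisson point process on $\mathcal{D}_\theta$ with intensity $\lambda e^{-\phi r}$), and that user $k$ has channel vector $\mathbf{h}_k=\sqrt{M}\,\frac{a_k\mathbf{a}(\theta_k)}{\sqrt{1+r_k^{\alpha}}}$, where $a_1,\dots,a_K$ are i.i.d. $\mathcal{CN}(0,1)$, independent of the positions. Order the effective channel gains so that $|\mathbf{h}_{1}^H\mathbf{p}|^2\le\cdots\le|\mathbf{h}_{K}^H\mathbf{p}|^2$.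 Then for each $1\le j\le K$, the probability density function of the $j$-th smallest gain $|\mathbf{h}_{j}^H\mathbf{p}|^2$ is $$f_{|\mathbf{h}_{j}^H\mathbf{p}|^2}(z)=c_j\,\frac{dF_{\pi(j)}(z)}{dz}\,F_{\pi(j)}^{j-1}(z)\,\big(1-F_{\pi(j)}(z)\big)^{K-j},\qquad c_j=\frac{K!}{(j-1)!(K-j)!},$$ where $$F_{\pi(j)}(y)=\int_{\bar{\theta}-\Delta}^{\bar{\theta}+\Delta}\int_0^{R_{\mathcal{D}}}\left(1-e^{-\frac{y(1+r^{\alpha})}{F_M(\pi[\bar{\theta}-\theta])}}\right)\frac{\lambda\phi^{2}e^{-\phi r}}{2\Delta\lambda\,\gamma(2,R_{\mathcal{D}}\phi)}\,r\,dr\,d\theta .$$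
   Context: $F_M(x)=\frac{\sin^2(Mx/2)}{M\sin^2(x/2)}$ denotes the Fejér kernel (with $F_M(0)=M$), so that $|\mathbf{h}_k^H\mathbf{p}|^2=\frac{|a_k|^2}{1+r_k^\alpha}F_M(\pi[\bar\theta-\theta_k])$. $\gamma(s,x)=\int_0^x t^{s-1}e^{-t}\,dt$ is the lower incomplete gamma function. $\mathrm{j}=\sqrt{-1}$. *)

theory Defs
  imports "HOL-Probability.Probability"
begin

definition lower_gamma :: "real \<Rightarrow> real \<Rightarrow> real" where
  "lower_gamma s x = (LBINT t=0..x. t powr (s - 1) * exp (- t))"

text \<open>Fejer kernel F_M(x) = sin^2(Mx/2)/(M sin^2(x/2)), continuously extended
  (value M) where sin(x/2) = 0.\<close>
definition fejer :: "nat \<Rightarrow> real \<Rightarrow> real" where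
  "fejer M x = (if sin (x / 2) = 0 then real M
                else (sin (real M * x / 2))\<^sup>2 / (real M * (sin (x / 2))\<^sup>2))"

definition steer :: "nat \<Rightarrow> real \<Rightarrow> nat \<Rightarrow> complex" where
  "steer M \<theta> m = exp (- \<i> * complex_of_real (pi * real m * \<theta>)) / complex_of_real (sqrt (real M))"

definition chan :: "nat \<Rightarrow> real \<Rightarrow> real \<Rightarrow> real \<Rightarrow> complex \<Rightarrow> nat \<Rightarrow> complex" where
  "chan M \<alpha> r \<theta> a m = complex_of_real (sqrt (real M)) * a * steer M \<theta> m
                            / complex_of_real (sqrt (1 + r powr \<alpha>))"

definition gain :: "nat \<Rightarrow> real \<Rightarrow> real \<Rightarrow> real \<Rightarrow> real \<Rightarrow> complex \<Rightarrow> real" where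
  "gain M \<alpha> \<theta>bar r \<theta> a = (cmod (\<Sum>m<M. cnj (chan M \<alpha> r \<theta> a m) * steer M \<theta>bar m))\<^sup>2"

text \<open>j-th smallest (1-based) among g 0, ..., g (K-1).\<close>
definition order_stat :: "nat \<Rightarrow> (nat \<Rightarrow> real) \<Rightarrow> nat \<Rightarrow> real" where
  "order_stat K g j = sort (map g [0..<K]) ! (j - 1)"

definition pos_density :: "real \<Rightarrow> real \<Rightarrow> real \<Rightarrow> real \<Rightarrow> real \<Rightarrow> real \<Rightarrow> real" where
  "pos_density \<phi> R \<Delta> \<theta>bar r \<theta> =
     indicator ({0..R} \<times> {\<theta>bar - \<Delta>..\<theta>bar + \<Delta>}) (r, \<theta>) *
     (\<phi>\<^sup>2 * exp (- \<phi> * r) / (2 * \<Delta> * lower_gamma 2 (R * \<phi>)) * r)"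

definition cn_density :: "complex \<Rightarrow> real" where
  "cn_density z = exp (- (cmod z)\<^sup>2) / pi"

definition Fpi :: "nat \<Rightarrow> real \<Rightarrow> real \<Rightarrow> real \<Rightarrow> real \<Rightarrow> real \<Rightarrow> real \<Rightarrow> real \<Rightarrow> real" where
  "Fpi M \<alpha> \<phi> lam R \<Delta> \<theta>bar y =
     (LBINT \<theta>=\<theta>bar - \<Delta>..\<theta>bar + \<Delta>. (LBINT r=0..R.
        (1 - exp (- (y * (1 + r powr \<alpha>) / fejer M (pi * (\<theta>bar - \<theta>)))))
        * (lam * \<phi>\<^sup>2 * exp (- \<phi> * r) / (2 * \<Delta> * lam * lower_gamma 2 (R * \<phi>))) * r))"

end

theory Submission
  imports Defs
begin

(* Given the position (r, theta) of a user, its gain is |a|^2 / c(r, theta) with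
   c = (1 + r^alpha) / F_M(pi (thetabar - theta)).  Since |a|^2 is Exp(1)-distributed for
   a ~ CN(0,1), the gain has cdf  E[1 - exp (- y c(r, theta))] = F_pi(y).  The K gains are
   i.i.d., and the j-th smallest one is <= y iff at least j of them are, so its cdf is the
   binomial tail  sum_{i >= j} (K choose i) F_pi^i (1 - F_pi)^(K - i),  whose derivative
   telescopes to  c_j F_pi' F_pi^(j-1) (1 - F_pi)^(K-j).  Dominated convergence shows that
   F_pi is continuous on [0, oo) and differentiable on (0, oo), which turns this cdf into
   the claimed density. *)

section \<open>The array gain\<close>

lemma norm_cis_minus_one_power2: "(cmod (cis t - 1))\<^sup>2 = 4 * (sin (t / 2))\<^sup>2"
proof -
  have "(cmod (cis t - 1))\<^sup>2 = (cos t - 1)\<^sup>2 + (sin t)\<^sup>2"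
    by (simp add: cmod_power2)
  also have "\<dots> = 2 - 2 * cos t"
    using sin_cos_squared_add[of t] by (simp add: power2_eq_square algebra_simps)
  also have "cos t = 1 - 2 * (sin (t / 2))\<^sup>2"
    using cos_double_sin[of "t / 2"] by simp
  finally show ?thesis by simp
qed

lemma norm_sum_cis_power2: "(cmod (\<Sum>m<M. cis (real m * x)))\<^sup>2 = real M * fejer M x"
proof (cases "sin (x / 2) = 0")
  case True
  then obtain i :: int where "x = 2 * pi * i"
    using sin_zero_iff_int2 by (metis mult.commute nonzero_mult_div_cancel_left times_divide_eq_right zero_neq_numeral)
  then have "cis (real m * x) = 1" for m
    by (metis cis_multiple_2pi mult.left_commute of_int_mult of_int_of_nat_eq Ints_of_int)
  then show ?thesis using True by (simp add: fejer_def power2_eq_square)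
next
  case False
  then have "cis x \<noteq> 1"
    using norm_cis_minus_one_power2[of x] by auto
  have "(\<Sum>m<M. cis (real m * x)) = (\<Sum>m<M. cis x ^ m)"
    by (intro sum.cong refl) (simp add: Complex.DeMoivre)
  also have "\<dots> = (cis x ^ M - 1) / (cis x - 1)"
    using \<open>cis x \<noteq> 1\<close> by (rule geometric_sum)
  also have "cis x ^ M = cis (real M * x)"
    by (rule Complex.DeMoivre)
  finally have "(cmod (\<Sum>m<M. cis (real m * x)))\<^sup>2
      = (cmod (cis (real M * x) - 1))\<^sup>2 / (cmod (cis x - 1))\<^sup>2"
    by (simp add: norm_divide power_divide)
  then show ?thesis
    using False by (simp add: norm_cis_minus_one_power2 fejer_def)
qed

lemma fejer_nonneg: "0 \<le> fejer M x"
  by (simp add: fejer_def)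

lemma fejer_minus: "fejer M (- x) = fejer M x"
  by (simp add: fejer_def)

lemma borel_measurable_fejer [measurable]: "fejer M \<in> borel_measurable borel"
  unfolding fejer_def[abs_def] by measurable

lemma fejer_eq_0E:
  assumes "M \<ge> 1" "fejer M x = 0"
  obtains n :: int where "x = 2 * pi * n / M"
proof -
  have "sin (real M * x / 2) = 0"
    using assms by (auto simp: fejer_def split: if_splits)
  then obtain n :: int where "real M * x / 2 = n * pi"
    using sin_zero_iff_int2 by blast
  then have "x = 2 * pi * n / M"
    using assms(1) by (simp add: field_simps)
  then show thesis ..
qed

lemma gain_eq:
  assumes "M \<ge> 1"
  shows "gain M \<alpha> \<theta>bar r \<theta> a = (cmod a)\<^sup>2 / (1 + r powr \<alpha>) * fejer M (pi * (\<theta>bar - \<theta>))"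
proof -
  define s where "s = sqrt (1 + r powr \<alpha>)"
  have "s > 0" "s\<^sup>2 = 1 + r powr \<alpha>"
    unfolding s_def by (simp_all add: add_pos_nonneg add_nonneg_nonneg)
  have sM: "sqrt (real M) > 0" using assms by simp
  have "cnj (chan M \<alpha> r \<theta> a m) * steer M \<theta>bar m
      = cnj a / (of_real s * of_real (sqrt (real M))) * cis (real m * (pi * (\<theta> - \<theta>bar)))" for m
    using sM \<open>s > 0\<close>
    by (simp add: chan_def steer_def s_def[symmetric] cis_conv_exp exp_cnj exp_add[symmetric] field_simps)
  then have "(\<Sum>m<M. cnj (chan M \<alpha> r \<theta> a m) * steer M \<theta>bar m)
      = cnj a / (of_real s * of_real (sqrt (real M))) * (\<Sum>m<M. cis (real m * (pi * (\<theta> - \<theta>bar))))"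
    by (simp add: sum_distrib_left)
  then have "gain M \<alpha> \<theta>bar r \<theta> a
      = (cmod a)\<^sup>2 / (s\<^sup>2 * real M) * (real M * fejer M (pi * (\<theta> - \<theta>bar)))"
    unfolding gain_def norm_sum_cis_power2[symmetric] using \<open>s > 0\<close> sM
    by (simp add: norm_mult norm_divide power_mult_distrib power_divide)
  also have "fejer M (pi * (\<theta> - \<theta>bar)) = fejer M (pi * (\<theta>bar - \<theta>))"
    by (metis fejer_minus minus_diff_eq mult_minus_right)
  finally show ?thesis
    using \<open>s\<^sup>2 = 1 + r powr \<alpha>\<close> sM by simp
qed

lemma borel_measurable_gain:
  assumes "1 \<le> M"
  shows "(\<lambda>v. gain M \<alpha> \<theta>bar (fst (fst v)) (snd (fst v)) (snd v))
    \<in> borel_measurable ((lborel \<Otimes>\<^sub>M lborel) \<Otimes>\<^sub>M lborel)"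
  using assms by (simp add: gain_eq)

lemma gain_nonneg: "0 \<le> gain M \<alpha> \<theta>bar r \<theta> a"
  by (simp add: gain_def)

text \<open>Where the Fejer kernel vanishes the gain is identically 0 while attenuation divides
  by 0; these directions form a null set.\<close>
lemma AE_fejer_neq_0:
  assumes "1 \<le> M"
  shows "AE p in lborel \<Otimes>\<^sub>M lborel. fejer M (pi * (\<theta>bar - snd p)) \<noteq> 0"
proof (rule AE_I')
  define Z where "Z = range (\<lambda>n :: int. \<theta>bar - 2 * n / M)"
  have "Z \<in> null_sets lborel"
    unfolding Z_def by (intro countable_imp_null_set_lborel) simp
  then show "UNIV \<times> Z \<in> null_sets (lborel \<Otimes>\<^sub>M lborel)"
    by (intro lborel.times_in_null_sets2) auto
  have "snd p \<in> Z" if zero: "fejer M (pi * (\<theta>bar - snd p)) = 0" for p :: "real \<times> real"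
  proof -
    obtain n :: int where "pi * (\<theta>bar - snd p) = 2 * pi * n / M"
      using fejer_eq_0E[OF assms zero] .
    then have "pi * (\<theta>bar - snd p) = pi * (2 * n / M)"
      by simp
    then have "snd p = \<theta>bar - 2 * n / M"
      by (simp only: mult_cancel_left pi_neq_zero simp_thms)
    then show ?thesis
      unfolding Z_def by (rule range_eqI)
  qed
  then show "{p \<in> space (lborel \<Otimes>\<^sub>M lborel). \<not> fejer M (pi * (\<theta>bar - snd p)) \<noteq> 0} \<subseteq> UNIV \<times> Z"
    by (auto simp: mem_Times_iff)
qed

text \<open>Given the position, the gain is |a|^2 / attenuation with |a|^2 ~ Exp(1), hence exponential
  with rate attenuation.\<close>
definition attenuation :: "nat \<Rightarrow> real \<Rightarrow> real \<Rightarrow> real \<Rightarrow> real \<Rightarrow> real" where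
  "attenuation M \<alpha> \<theta>bar r \<theta> = (1 + r powr \<alpha>) / fejer M (pi * (\<theta>bar - \<theta>))"

lemma attenuation_nonneg: "0 \<le> attenuation M \<alpha> \<theta>bar r \<theta>"
  unfolding attenuation_def by (simp add: fejer_nonneg add_nonneg_nonneg)

lemma borel_measurable_attenuation [measurable]:
  "(\<lambda>p. attenuation M \<alpha> \<theta>bar (fst p) (snd p)) \<in> borel_measurable (lborel \<Otimes>\<^sub>M lborel)"
  unfolding attenuation_def by measurable

section \<open>The circularly-symmetric complex Gaussian\<close>

lemma emeasure_norm_power2_le:
  assumes "0 \<le> s"
  shows "emeasure lborel {z :: complex. (cmod z)\<^sup>2 \<le> s} = ennreal (pi * s)"
proof -
  have "(cmod z)\<^sup>2 \<le> s \<longleftrightarrow> z \<in> cball 0 (sqrt s)" for z :: complex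
    using real_sqrt_le_iff[of "(cmod z)\<^sup>2" s] by simp
  then have "{z :: complex. (cmod z)\<^sup>2 \<le> s} = cball 0 (sqrt s)"
    by blast
  also have "emeasure lborel \<dots> = ennreal (unit_ball_vol (real DIM(complex)) * sqrt s ^ DIM(complex))"
    using assms by (intro emeasure_cball) simp
  finally show ?thesis
    using assms by (simp add: unit_ball_vol_2)
qed

lemma nn_integral_exp_neg_Icc:
  fixes a b :: real
  assumes "a \<le> b"
  shows "(\<integral>\<^sup>+s. ennreal (exp (- s)) * indicator {a..b} s \<partial>lborel) = ennreal (exp (- a) - exp (- b))"
proof -
  have "(\<integral>\<^sup>+s. ennreal (exp (- s)) * indicator {a..b} s \<partial>lborel) = ennreal (- exp (- b) - - exp (- a))"
    using assms by (intro nn_integral_FTC_Icc) (auto intro!: derivative_eq_intros)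
  then show ?thesis
    by simp
qed

lemma nn_integral_indicator_norm_power2_le:
  fixes s t :: real
  shows "(\<integral>\<^sup>+z. indicator {(cmod z)\<^sup>2..t} s \<partial>(lborel :: complex measure)) = ennreal (pi * s) * indicator {0..t} s"
proof (cases "0 \<le> s")
  case True
  have "(\<lambda>z :: complex. indicator {(cmod z)\<^sup>2..t} s :: ennreal)
      = (\<lambda>z. indicator {..t} s * indicator {z. (cmod z)\<^sup>2 \<le> s} z)"
    by (auto simp: indicator_def)
  moreover have "{z :: complex. (cmod z)\<^sup>2 \<le> s} \<in> sets lborel"
    by measurable
  ultimately have "(\<integral>\<^sup>+z. indicator {(cmod z)\<^sup>2..t} s \<partial>(lborel :: complex measure))
      = indicator {..t} s * ennreal (pi * s)"
    using True by (simp add: nn_integral_cmult_indicator emeasure_norm_power2_le)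
  then show ?thesis
    using True by (simp add: mult.commute split: split_indicator)
next
  case False
  then have "(cmod z)\<^sup>2 \<notin> {..s}" for z :: complex
    by (simp add: not_le) (smt (verit) zero_le_power2)
  then show ?thesis
    using False by (simp add: indicator_def)
qed

text \<open>Layer cake: exp(-rho) = exp(-t) + (integral of exp(-s) over rho <= s <= t) for rho <= t;
  then Tonelli and the area pi s of the disc |z|^2 <= s.\<close>
lemma nn_integral_exp_neg_norm_power2_le:
  assumes t: "0 \<le> t"
  shows "(\<integral>\<^sup>+z. ennreal (exp (- (cmod z)\<^sup>2)) * indicator {z. (cmod z)\<^sup>2 \<le> t} z \<partial>lborel)
       = ennreal (pi * (1 - exp (- t)))"
proof -
  let ?f = "\<lambda>(z :: complex) s. ennreal (exp (- s)) * indicator {(cmod z)\<^sup>2..t} s"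
  have meas: "(\<lambda>(z, s). ?f z s) \<in> borel_measurable (lborel \<Otimes>\<^sub>M lborel)"
    unfolding indicator_def atLeastAtMost_iff by measurable
  have layer: "ennreal (exp (- (cmod z)\<^sup>2)) * indicator {z. (cmod z)\<^sup>2 \<le> t} z
      = (\<integral>\<^sup>+s. ?f z s \<partial>lborel) + ennreal (exp (- t)) * indicator {z. (cmod z)\<^sup>2 \<le> t} z" for z
    by (cases "(cmod z)\<^sup>2 \<le> t") (simp_all add: nn_integral_exp_neg_Icc flip: ennreal_plus)
  have disc: "{z :: complex. (cmod z)\<^sup>2 \<le> t} \<in> sets lborel"
    by measurable
  have "(\<integral>\<^sup>+z. ennreal (exp (- (cmod z)\<^sup>2)) * indicator {z. (cmod z)\<^sup>2 \<le> t} z \<partial>lborel)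
      = (\<integral>\<^sup>+z. \<integral>\<^sup>+s. ?f z s \<partial>lborel \<partial>lborel) + ennreal (exp (- t)) * ennreal (pi * t)"
    unfolding layer using meas disc t
    by (subst nn_integral_add)
       (auto intro: lborel.borel_measurable_nn_integral simp: nn_integral_cmult_indicator emeasure_norm_power2_le)
  also have "(\<integral>\<^sup>+z. \<integral>\<^sup>+s. ?f z s \<partial>lborel \<partial>lborel) = (\<integral>\<^sup>+s. \<integral>\<^sup>+z. ?f z s \<partial>lborel \<partial>lborel)"
    using meas by (rule lborel_pair.Fubini'[symmetric])
  also have "\<dots> = (\<integral>\<^sup>+s. ennreal (pi * s * exp (- s)) * indicator {0..t} s \<partial>lborel)"
  proof (intro nn_integral_cong)
    fix s :: real
    have "(\<lambda>z. indicator {(cmod z)\<^sup>2..t} s :: ennreal) \<in> borel_measurable (lborel :: complex measure)"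
      unfolding indicator_def atLeastAtMost_iff by measurable
    then have "(\<integral>\<^sup>+z. ?f z s \<partial>lborel) = ennreal (exp (- s)) * (ennreal (pi * s) * indicator {0..t} s)"
      by (simp add: nn_integral_cmult[of _ _ "ennreal (exp (- s))"] nn_integral_indicator_norm_power2_le)
    then show "(\<integral>\<^sup>+z. ?f z s \<partial>lborel) = ennreal (pi * s * exp (- s)) * indicator {0..t} s"
      by (auto simp: ennreal_mult[symmetric] mult_ac split: split_indicator)
  qed
  also have "\<dots> = ennreal (- pi * (1 + t) * exp (- t) - - pi * (1 + 0) * exp (- 0))"
    using t by (intro nn_integral_FTC_Icc) (auto intro!: derivative_eq_intros simp: algebra_simps)
  also have "\<dots> + ennreal (exp (- t)) * ennreal (pi * t)
      = ennreal (pi * (1 - (1 + t) * exp (- t))) + ennreal (pi * t * exp (- t))"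
    using t by (simp add: ennreal_mult[symmetric] algebra_simps)
  also have "\<dots> = ennreal (pi * (1 - exp (- t)))"
  proof -
    have "(1 + t) * exp (- t) \<le> 1"
      using exp_ge_add_one_self[of t] by (simp add: exp_minus field_simps)
    then have "ennreal (pi * (1 - (1 + t) * exp (- t))) + ennreal (pi * t * exp (- t))
        = ennreal (pi * (1 - (1 + t) * exp (- t)) + pi * t * exp (- t))"
      using t by (intro ennreal_plus[symmetric]) auto
    then show ?thesis
      by (simp add: algebra_simps)
  qed
  finally show ?thesis .
qed

lemma cn_density_nonneg: "0 \<le> cn_density z"
  by (simp add: cn_density_def)

lemma borel_measurable_cn_density [measurable]: "cn_density \<in> borel_measurable borel"
  unfolding cn_density_def[abs_def] by measurable

lemma cn_density_norm_power2_le: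
  assumes "0 \<le> t"
  shows "(\<integral>\<^sup>+z. ennreal (cn_density z) * indicator {z. (cmod z)\<^sup>2 \<le> t} z \<partial>lborel) = ennreal (1 - exp (- t))"
proof -
  have "(\<integral>\<^sup>+z. ennreal (cn_density z) * indicator {z. (cmod z)\<^sup>2 \<le> t} z \<partial>lborel)
      = ennreal (1 / pi) * (\<integral>\<^sup>+z. ennreal (exp (- (cmod z)\<^sup>2)) * indicator {z. (cmod z)\<^sup>2 \<le> t} z \<partial>lborel)"
    by (subst nn_integral_cmult[symmetric])
       (auto intro!: nn_integral_cong simp: cn_density_def mult.assoc[symmetric] ennreal_mult[symmetric])
  then show ?thesis
    using assms by (simp add: nn_integral_exp_neg_norm_power2_le ennreal_mult[symmetric])
qed

section \<open>The gain of a single user\<close>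

lemma sets_gain_le:
  assumes "1 \<le> M"
  shows "{v. gain M \<alpha> \<theta>bar (fst (fst v)) (snd (fst v)) (snd v) \<le> y} \<in> sets ((lborel \<Otimes>\<^sub>M lborel) \<Otimes>\<^sub>M lborel)"
proof -
  have "{v. gain M \<alpha> \<theta>bar (fst (fst v)) (snd (fst v)) (snd v) \<le> y}
      = (\<lambda>v. gain M \<alpha> \<theta>bar (fst (fst v)) (snd (fst v)) (snd v)) -` {..y} \<inter> space ((lborel \<Otimes>\<^sub>M lborel) \<Otimes>\<^sub>M lborel)"
    by (auto simp: space_pair_measure)
  also have "\<dots> \<in> sets ((lborel \<Otimes>\<^sub>M lborel) \<Otimes>\<^sub>M lborel)"
    by (rule measurable_sets[OF borel_measurable_gain[OF assms]]) simp
  finally show ?thesis .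
qed

lemma nn_integral_cn_density_gain_le:
  assumes M: "1 \<le> M" and y: "0 \<le> y" and F_neq_0: "fejer M (pi * (\<theta>bar - \<theta>)) \<noteq> 0"
  shows "(\<integral>\<^sup>+z. ennreal (cn_density z) * indicator {z. gain M \<alpha> \<theta>bar r \<theta> z \<le> y} z \<partial>lborel)
      = ennreal (1 - exp (- (y * attenuation M \<alpha> \<theta>bar r \<theta>)))"
proof -
  have F: "0 < fejer M (pi * (\<theta>bar - \<theta>))"
    using F_neq_0 fejer_nonneg[of M] by (simp add: less_le)
  have c: "0 < 1 + r powr \<alpha>"
    by (simp add: add_pos_nonneg)
  have "gain M \<alpha> \<theta>bar r \<theta> z \<le> y \<longleftrightarrow> (cmod z)\<^sup>2 \<le> y * attenuation M \<alpha> \<theta>bar r \<theta>" for z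
    using F c M by (simp add: gain_eq attenuation_def field_simps)
  then show ?thesis
    using y F c by (simp add: cn_density_norm_power2_le attenuation_def)
qed

lemma emeasure_gain_le:
  fixes P :: "'w measure" and d :: "real \<Rightarrow> real \<Rightarrow> real"
  assumes M: "1 \<le> M" and y: "0 \<le> y"
    and d: "\<And>x t. 0 \<le> d x t" "(\<lambda>p. d (fst p) (snd p)) \<in> borel_measurable (lborel \<Otimes>\<^sub>M lborel)"
    and law: "distributed P (lborel :: ((real \<times> real) \<times> complex) measure) (\<lambda>\<omega>. ((r \<omega>, \<theta> \<omega>), a \<omega>))
        (\<lambda>((x, t), z). ennreal (d x t * cn_density z))"
  shows "emeasure P {\<omega> \<in> space P. gain M \<alpha> \<theta>bar (r \<omega>) (\<theta> \<omega>) (a \<omega>) \<le> y}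
      = (\<integral>\<^sup>+p. ennreal (d (fst p) (snd p) * (1 - exp (- (y * attenuation M \<alpha> \<theta>bar (fst p) (snd p)))))
           \<partial>(lborel \<Otimes>\<^sub>M lborel))"
proof -
  let ?A = "{v. gain M \<alpha> \<theta>bar (fst (fst v)) (snd (fst v)) (snd v) \<le> y}"
  let ?g = "\<lambda>v. ennreal (d (fst (fst v)) (snd (fst v)) * cn_density (snd v)) * indicator ?A v"
  have lborel: "(lborel :: ((real \<times> real) \<times> complex) measure) = (lborel \<Otimes>\<^sub>M lborel) \<Otimes>\<^sub>M lborel"
    by (simp add: lborel_prod)
  have A: "?A \<in> sets ((lborel \<Otimes>\<^sub>M lborel) \<Otimes>\<^sub>M lborel)"
    using M by (rule sets_gain_le)
  then have "emeasure P {\<omega> \<in> space P. gain M \<alpha> \<theta>bar (r \<omega>) (\<theta> \<omega>) (a \<omega>) \<le> y}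
      = (\<integral>\<^sup>+v. ?g v \<partial>lborel)"
    using distributed_emeasure[OF law, of ?A] by (simp add: lborel split_beta' vimage_def Int_def conj_commute)
  also have "\<dots> = (\<integral>\<^sup>+p. \<integral>\<^sup>+z. ?g (p, z) \<partial>lborel \<partial>(lborel \<Otimes>\<^sub>M lborel))"
  proof -
    note A [measurable]
    have [measurable]: "(\<lambda>v. d (fst (fst v)) (snd (fst v))) \<in> borel_measurable ((lborel \<Otimes>\<^sub>M lborel) \<Otimes>\<^sub>M lborel)"
      by (rule measurable_compose[OF measurable_fst d(2)])
    show ?thesis
      unfolding lborel by (intro lborel.nn_integral_fst[symmetric]) (simp add: cn_density_def)
  qed
  also have "\<dots> = (\<integral>\<^sup>+p. ennreal (d (fst p) (snd p) * (1 - exp (- (y * attenuation M \<alpha> \<theta>bar (fst p) (snd p)))))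
                    \<partial>(lborel \<Otimes>\<^sub>M lborel))"
  proof (intro nn_integral_cong_AE, use AE_fejer_neq_0[OF M] in eventually_elim)
    fix p :: "real \<times> real"
    assume "fejer M (pi * (\<theta>bar - snd p)) \<noteq> 0"
    moreover have "(\<integral>\<^sup>+z. ?g (p, z) \<partial>lborel) = ennreal (d (fst p) (snd p))
        * (\<integral>\<^sup>+z. ennreal (cn_density z) * indicator {z. gain M \<alpha> \<theta>bar (fst p) (snd p) z \<le> y} z \<partial>lborel)"
      using d M by (subst nn_integral_cmult[symmetric])
        (auto intro!: nn_integral_cong simp: ennreal_mult cn_density_nonneg gain_eq split: split_indicator)
    moreover have "0 \<le> 1 - exp (- (y * attenuation M \<alpha> \<theta>bar (fst p) (snd p)))"
      using y attenuation_nonneg by simp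
    ultimately show "(\<integral>\<^sup>+z. ?g (p, z) \<partial>lborel)
        = ennreal (d (fst p) (snd p) * (1 - exp (- (y * attenuation M \<alpha> \<theta>bar (fst p) (snd p)))))"
      using M y d by (simp add: nn_integral_cn_density_gain_le ennreal_mult)
  qed
  finally show ?thesis .
qed

section \<open>Integrals depending on a rate parameter\<close>

lemma integral_dominated_convergence_at:
  fixes s :: "'c::first_countable_topology \<Rightarrow> 'a \<Rightarrow> 'b::{banach, second_countable_topology}"
    and w :: "'a \<Rightarrow> real"
  assumes "\<And>t. s t \<in> borel_measurable M" "f \<in> borel_measurable M" "integrable M w"
    and lim: "AE x in M. ((\<lambda>t. s t x) \<longlongrightarrow> f x) (at t0 within S)"
    and bound: "\<forall>\<^sub>F t in at t0 within S. AE x in M. norm (s t x) \<le> w x"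
  shows "((\<lambda>t. integral\<^sup>L M (s t)) \<longlongrightarrow> integral\<^sup>L M f) (at t0 within S)"
  unfolding tendsto_at_iff_sequentially comp_def
proof (intro allI impI)
  fix X assume "\<forall>i. X i \<in> S - {t0}" "X \<longlonglongrightarrow> t0"
  then have X: "filterlim X (at t0 within S) sequentially"
    by (auto simp: filterlim_at)
  from filterlim_iff[THEN iffD1, OF X, rule_format, OF bound]
  obtain N where w: "\<And>n. N \<le> n \<Longrightarrow> AE x in M. norm (s (X n) x) \<le> w x"
    by (auto simp: eventually_sequentially)
  show "(\<lambda>n. integral\<^sup>L M (s (X n))) \<longlonglongrightarrow> integral\<^sup>L M f"
  proof (rule LIMSEQ_offset, rule integral_dominated_convergence)
    show "AE x in M. norm (s (X (n + N)) x) \<le> w x" for n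
      by (rule w) auto
    show "AE x in M. (\<lambda>n. s (X (n + N)) x) \<longlonglongrightarrow> f x"
      using lim
    proof eventually_elim
      fix x assume "((\<lambda>t. s t x) \<longlongrightarrow> f x) (at t0 within S)"
      then show "(\<lambda>n. s (X (n + N)) x) \<longlonglongrightarrow> f x"
        by (intro LIMSEQ_ignore_initial_segment filterlim_compose[OF _ X])
    qed
  qed (use assms in auto)
qed

lemma abs_exp_neg_mult_diff_le:
  fixes a c y y' :: real
  assumes "0 \<le> c" "0 < a" "a \<le> y" "a \<le> y'"
  shows "\<bar>exp (- (y * c)) - exp (- (y' * c))\<bar> \<le> \<bar>y - y'\<bar> / a"
proof -
  have "exp (- (u * c)) * c \<le> 1 / a" if "a \<le> u" for u
  proof -
    have "u * c \<le> exp (u * c)"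
      using exp_ge_add_one_self[of "u * c"] by linarith
    then have "exp (- (u * c)) * c \<le> 1 / u"
      using that \<open>0 < a\<close> by (simp add: exp_minus field_simps)
    also have "\<dots> \<le> 1 / a"
      using that \<open>0 < a\<close> by (simp add: frac_le)
    finally show ?thesis .
  qed
  then have "norm (exp (- (y * c)) - exp (- (y' * c))) \<le> 1 / a * norm (y - y')"
    using assms
    by (intro field_differentiable_bound[where S = "{a..}" and f = "\<lambda>u. exp (- (u * c))"])
       (auto intro!: derivative_eq_intros)
  then show ?thesis
    by simp
qed

lemma abs_exp_neg_mult_diff_quotient_le:
  fixes c y y0 :: real
  assumes "0 \<le> c" "0 < y0" "y0 / 2 < y"
  shows "\<bar>(exp (- (y0 * c)) - exp (- (y * c))) / (y - y0)\<bar> \<le> 2 / y0"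
proof -
  have "\<bar>exp (- (y0 * c)) - exp (- (y * c))\<bar> \<le> \<bar>y0 - y\<bar> / (y0 / 2)"
    using assms by (intro abs_exp_neg_mult_diff_le) auto
  then show ?thesis
    using assms by (cases "y = y0") (auto simp: abs_divide abs_minus_commute divide_le_eq mult.commute)
qed

context
  fixes M :: "'a measure" and w c :: "'a \<Rightarrow> real"
  assumes w: "integrable M w" and c: "c \<in> borel_measurable M" "\<And>x. 0 \<le> c x"
begin

lemma integrable_mult_one_minus_exp:
  assumes "0 \<le> y"
  shows "integrable M (\<lambda>x. w x * (1 - exp (- (y * c x))))"
  using w c assms
  by (intro Bochner_Integration.integrable_bound[OF integrable_norm[OF w]])
     (auto simp: abs_mult intro!: mult_left_le)

lemma continuous_on_integral_one_minus_exp: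
  "continuous_on {0..} (\<lambda>y. \<integral>x. w x * (1 - exp (- (y * c x))) \<partial>M)"
  unfolding continuous_on_def
proof (intro ballI integral_dominated_convergence_at[where w = "\<lambda>x. norm (w x)"])
  fix y0 :: real
  show "AE x in M. ((\<lambda>y. w x * (1 - exp (- (y * c x)))) \<longlongrightarrow> w x * (1 - exp (- (y0 * c x))))
      (at y0 within {0..})"
    by (intro AE_I2 tendsto_intros)
  have "norm (w x * (1 - exp (- (y * c x)))) \<le> norm (w x)" if "0 \<le> y" for x y
    using that c(2)[of x] by (auto simp: abs_mult intro!: mult_left_le)
  then show "\<forall>\<^sub>F y in at y0 within {0..}. AE x in M. norm (w x * (1 - exp (- (y * c x)))) \<le> norm (w x)"
    by (auto simp: eventually_at_filter)
qed (use w c in auto)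

lemma has_real_derivative_integral_one_minus_exp:
  assumes y0: "0 < y0"
  shows "((\<lambda>y. \<integral>x. w x * (1 - exp (- (y * c x))) \<partial>M)
          has_real_derivative (\<integral>x. w x * (c x * exp (- (y0 * c x))) \<partial>M)) (at y0)"
proof -
  let ?F = "\<lambda>y. \<integral>x. w x * (1 - exp (- (y * c x))) \<partial>M"
  let ?q = "\<lambda>y x. w x * ((exp (- (y0 * c x)) - exp (- (y * c x))) / (y - y0))"
  have ev: "\<forall>\<^sub>F y in at y0. y0 / 2 < y"
    using y0 by (intro order_tendstoD(1)[OF tendsto_ident_at]) simp
  have quotient: "(?F y - ?F y0) / (y - y0) = (\<integral>x. ?q y x \<partial>M)" if "0 < y" for y
  proof -
    have "?F y - ?F y0 = (\<integral>x. w x * (1 - exp (- (y * c x))) - w x * (1 - exp (- (y0 * c x))) \<partial>M)"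
      using that y0 by (intro Bochner_Integration.integral_diff[symmetric] integrable_mult_one_minus_exp) auto
    also have "\<dots> = (\<integral>x. w x * (exp (- (y0 * c x)) - exp (- (y * c x))) \<partial>M)"
      by (simp add: algebra_simps)
    finally show ?thesis
      by (simp only: times_divide_eq_right integral_divide_zero)
  qed
  have "((\<lambda>y. \<integral>x. ?q y x \<partial>M) \<longlongrightarrow> (\<integral>x. w x * (c x * exp (- (y0 * c x))) \<partial>M)) (at y0)"
  proof (rule integral_dominated_convergence_at[where w = "\<lambda>x. norm (w x) * (2 / y0)"])
    show "AE x in M. ((\<lambda>y. ?q y x) \<longlongrightarrow> w x * (c x * exp (- (y0 * c x)))) (at y0)"
    proof (intro AE_I2 tendsto_mult_left)
      fix x
      have "((\<lambda>y. - exp (- (y * c x))) has_real_derivative c x * exp (- (y0 * c x))) (at y0)"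
        by (auto intro!: derivative_eq_intros)
      then show "((\<lambda>y. (exp (- (y0 * c x)) - exp (- (y * c x))) / (y - y0))
          \<longlongrightarrow> c x * exp (- (y0 * c x))) (at y0)"
        by (simp add: has_field_derivative_iff)
    qed
    show "\<forall>\<^sub>F y in at y0. AE x in M. norm (?q y x) \<le> norm (w x) * (2 / y0)"
      using ev
    proof (rule eventually_mono, intro AE_I2)
      fix y x assume "y0 / 2 < y"
      then have "\<bar>(exp (- (y0 * c x)) - exp (- (y * c x))) / (y - y0)\<bar> \<le> 2 / y0"
        using y0 c(2) by (intro abs_exp_neg_mult_diff_quotient_le)
      then show "norm (?q y x) \<le> norm (w x) * (2 / y0)"
        unfolding real_norm_def abs_mult by (rule mult_left_mono) simp
    qed
  qed (use w c in auto)
  moreover have "\<forall>\<^sub>F y in at y0. (\<integral>x. ?q y x \<partial>M) = (?F y - ?F y0) / (y - y0)"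
    using ev by (rule eventually_mono) (use y0 in \<open>simp only: quotient\<close>)
  ultimately show ?thesis
    unfolding has_field_derivative_iff by (rule Lim_transform_eventually)
qed

end

section \<open>Order statistics\<close>

lemma order_stat_le_iff:
  assumes "1 \<le> j" "j \<le> K"
  shows "order_stat K g j \<le> a \<longleftrightarrow> j \<le> card {k \<in> {..<K}. g k \<le> a}"
proof -
  define s where "s = sort (map g [0..<K])"
  have s: "length s = K" "sorted s"
    by (simp_all add: s_def)
  have "card {k \<in> {..<K}. g k \<le> a} = length (filter (\<lambda>x. x \<le> a) (map g [0..<K]))"
    unfolding length_filter_conv_card by (auto intro!: arg_cong[where f = card])
  also have "\<dots> = length (filter (\<lambda>x. x \<le> a) s)"
    unfolding s_def by (metis mset_filter mset_sort size_mset)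
  also have "\<dots> = card {i. i < K \<and> s ! i \<le> a}"
    by (simp add: length_filter_conv_card s)
  finally have card_eq: "card {k \<in> {..<K}. g k \<le> a} = card {i. i < K \<and> s ! i \<le> a}" .
  show ?thesis
  proof
    assume "order_stat K g j \<le> a"
    then have "s ! (j - 1) \<le> a"
      by (simp add: order_stat_def s_def)
    moreover have "s ! i \<le> s ! (j - 1)" if "i < j" for i
      using that assms s by (intro sorted_nth_mono) auto
    ultimately have "{..<j} \<subseteq> {i. i < K \<and> s ! i \<le> a}"
      using assms by force
    then have "j \<le> card {i. i < K \<and> s ! i \<le> a}"
      using card_mono[of "{i. i < K \<and> s ! i \<le> a}" "{..<j}"] by auto
    then show "j \<le> card {k \<in> {..<K}. g k \<le> a}"
      using card_eq by simp
  next
    assume j: "j \<le> card {k \<in> {..<K}. g k \<le> a}"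
    show "order_stat K g j \<le> a"
    proof (rule ccontr)
      assume "\<not> order_stat K g j \<le> a"
      then have "a < s ! (j - 1)"
        by (simp add: order_stat_def s_def)
      then have "{i. i < K \<and> s ! i \<le> a} \<subseteq> {..<j - 1}"
        using s by (auto simp: not_less[symmetric] dest: sorted_nth_mono[of s "j - 1"])
      then have "card {i. i < K \<and> s ! i \<le> a} \<le> j - 1"
        using card_mono[of "{..<j - 1}"] by fastforce
      then show False
        using j card_eq assms by simp
    qed
  qed
qed

lemma borel_measurable_order_stat:
  fixes X :: "nat \<Rightarrow> 'a \<Rightarrow> real"
  assumes "\<And>k. k < K \<Longrightarrow> X k \<in> borel_measurable M" "1 \<le> j" "j \<le> K"
  shows "(\<lambda>\<omega>. order_stat K (\<lambda>k. X k \<omega>) j) \<in> borel_measurable M"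
proof (rule borel_measurable_iff_le[THEN iffD2], intro allI)
  fix a
  have card: "real (card {k \<in> {..<K}. X k \<omega> \<le> a}) = (\<Sum>k<K. indicator {..a} (X k \<omega>))" for \<omega>
    by (simp only: real_of_card sum.inter_filter[OF finite_lessThan] indicator_def atMost_iff of_bool_def)
  have "order_stat K (\<lambda>k. X k \<omega>) j \<le> a \<longleftrightarrow> real j \<le> (\<Sum>k<K. indicator {..a} (X k \<omega>))" for \<omega>
    by (simp only: order_stat_le_iff[OF assms(2,3)] of_nat_le_iff[symmetric, where 'a = real] card)
  then have "{\<omega> \<in> space M. order_stat K (\<lambda>k. X k \<omega>) j \<le> a}
      = {\<omega> \<in> space M. real j \<le> (\<Sum>k<K. indicator {..a} (X k \<omega>))}"
    by blast
  also have "\<dots> \<in> sets M"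
    using assms by measurable
  finally show "{\<omega> \<in> space M. order_stat K (\<lambda>k. X k \<omega>) j \<le> a} \<in> sets M" .
qed

lemma has_real_derivative_Bernstein:
  assumes "1 \<le> i" "i \<le> n"
  shows "(Bernstein n i has_real_derivative real n * (Bernstein (n - 1) (i - 1) x - Bernstein (n - 1) i x)) (at x)"
proof -
  have "(Bernstein n i has_real_derivative real (n choose i) * real i * x ^ (i - 1) * (1 - x) ^ (n - i)
      - real (n choose i) * real (n - i) * x ^ i * (1 - x) ^ (n - i - 1)) (at x)"
    unfolding Bernstein_def by (auto intro!: derivative_eq_intros simp: algebra_simps)
  moreover have "real (n choose i) * real i = real n * real ((n - 1) choose (i - 1))"
    using times_binomial_minus1_eq[of i n] assms by (simp flip: of_nat_mult add: mult.commute)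
  moreover have "real (n choose i) * real (n - i) = real n * real ((n - 1) choose i)"
    using binomial_absorb_comp[of n i] by (simp flip: of_nat_mult add: mult.commute)
  moreover have "n - 1 - (i - 1) = n - i" "n - i - 1 = n - 1 - i"
    using assms by simp_all
  ultimately show ?thesis
    by (simp add: Bernstein_def right_diff_distrib mult.assoc)
qed

definition binomial_tail :: "nat \<Rightarrow> nat \<Rightarrow> real \<Rightarrow> real" where
  "binomial_tail K j p = (\<Sum>i = j..K. Bernstein K i p)"

lemma binomial_tail_0: "1 \<le> j \<Longrightarrow> binomial_tail K j 0 = 0"
  unfolding binomial_tail_def Bernstein_def by (intro sum.neutral) auto

lemma has_real_derivative_binomial_tail:
  assumes "1 \<le> j" "j \<le> K"
  shows "(binomial_tail K j has_real_derivative
           fact K / (fact (j - 1) * fact (K - j)) * p ^ (j - 1) * (1 - p) ^ (K - j)) (at p)"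
proof -
  let ?B = "\<lambda>i. real K * Bernstein (K - 1) i p"
  have "(binomial_tail K j has_real_derivative (\<Sum>i = j..K. ?B (i - 1) - ?B i)) (at p)"
    unfolding binomial_tail_def[abs_def] using assms
    by (intro DERIV_sum has_real_derivative_Bernstein[THEN DERIV_cong]) (auto simp: right_diff_distrib)
  also have "(\<Sum>i = j..K. ?B (i - 1) - ?B i) = - (\<Sum>i = Suc (j - 1)..K. ?B i - ?B (i - 1))"
    using assms by (simp add: sum_negf[symmetric])
  also have "\<dots> = ?B (j - 1) - ?B K"
    using assms sum_telescope''[of "j - 1" K ?B] by simp
  also have "?B K = 0"
    by (cases K) (simp_all add: Bernstein_def)
  also have "?B (j - 1) - 0 = fact K / (fact (j - 1) * fact (K - j)) * p ^ (j - 1) * (1 - p) ^ (K - j)"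
  proof -
    have "real ((K - 1) choose (j - 1)) = fact (K - 1) / (fact (j - 1) * fact (K - j))"
      using assms by (subst binomial_fact) auto
    moreover have "fact K = real K * fact (K - 1)"
      using assms fact_reduce[of K] by simp
    moreover have "K - 1 - (j - 1) = K - j"
      using assms by simp
    ultimately show ?thesis
      using assms by (simp add: Bernstein_def)
  qed
  finally show ?thesis .
qed

lemma (in prob_space) prob_indices_le_eq:
  fixes X :: "'i \<Rightarrow> 'a \<Rightarrow> real"
  assumes indep: "indep_vars (\<lambda>_. borel) X I" and I: "finite I" "S \<subseteq> I"
    and cdf: "\<And>k. k \<in> I \<Longrightarrow> prob {\<omega> \<in> space M. X k \<omega> \<le> a} = p"
  shows "prob {\<omega> \<in> space M. {k \<in> I. X k \<omega> \<le> a} = S} = p ^ card S * (1 - p) ^ (card I - card S)"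
proof (cases "I = {}")
  case True
  then show ?thesis
    using I by (simp add: prob_space)
next
  case False
  define A where "A k = (if k \<in> S then {..a} else {a<..})" for k
  have meas: "X k \<in> borel_measurable M" if "k \<in> I" for k
    using indep that by (auto simp: indep_vars_def2)
  have prob_A: "prob (X k -` A k \<inter> space M) = (if k \<in> S then p else 1 - p)" if "k \<in> I" for k
  proof -
    have "X k -` {a<..} \<inter> space M = space M - {\<omega> \<in> space M. X k \<omega> \<le> a}"
      by auto
    moreover have "{\<omega> \<in> space M. X k \<omega> \<le> a} \<in> events"
      using meas[OF that] by measurable
    ultimately show ?thesis
      using cdf[OF that] by (auto simp: A_def prob_compl vimage_def Collect_conj_eq Int_commute)
  qed
  have "{\<omega> \<in> space M. {k \<in> I. X k \<omega> \<le> a} = S} = (\<Inter>k\<in>I. X k -` A k \<inter> space M)"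
    using False I by (auto simp: A_def split: if_splits)
  then have "prob {\<omega> \<in> space M. {k \<in> I. X k \<omega> \<le> a} = S} = (\<Prod>k\<in>I. prob (X k -` A k \<inter> space M))"
    using False I by (simp only:) (rule indep_varsD_finite[OF indep], auto simp: A_def)
  also have "\<dots> = (\<Prod>k\<in>I. if k \<in> S then p else 1 - p)"
    by (intro prod.cong refl) (simp add: prob_A)
  also have "\<dots> = p ^ card S * (1 - p) ^ (card I - card S)"
    using I by (simp add: prod.If_cases Int_absorb1 Diff_eq[symmetric] card_Diff_subset finite_subset)
  finally show ?thesis .
qed

lemma (in prob_space) prob_order_stat_le:
  fixes X :: "nat \<Rightarrow> 'a \<Rightarrow> real"
  assumes indep: "indep_vars (\<lambda>_. borel) X {..<K}"
    and cdf: "\<And>k. k < K \<Longrightarrow> prob {\<omega> \<in> space M. X k \<omega> \<le> a} = p"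
    and j: "1 \<le> j" "j \<le> K"
  shows "prob {\<omega> \<in> space M. order_stat K (\<lambda>k. X k \<omega>) j \<le> a} = binomial_tail K j p"
proof -
  define E where "E S = {\<omega> \<in> space M. {k \<in> {..<K}. X k \<omega> \<le> a} = S}" for S
  define \<S> where "\<S> = {S. S \<subseteq> {..<K} \<and> j \<le> card S}"
  have fin: "finite \<S>"
    unfolding \<S>_def by (rule finite_subset[of _ "Pow {..<K}"]) auto
  have E_events: "E S \<in> events" for S
  proof -
    have "X k \<in> borel_measurable M" if "k < K" for k
      using indep that by (auto simp: indep_vars_def2)
    then show ?thesis
      unfolding E_def set_eq_iff by measurable
  qed
  have "{\<omega> \<in> space M. order_stat K (\<lambda>k. X k \<omega>) j \<le> a} = (\<Union>S\<in>\<S>. E S)"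
    by (auto simp: E_def \<S>_def order_stat_le_iff[OF j])
  then have "prob {\<omega> \<in> space M. order_stat K (\<lambda>k. X k \<omega>) j \<le> a} = prob (\<Union>S\<in>\<S>. E S)"
    by simp
  also have "\<dots> = (\<Sum>S\<in>\<S>. prob (E S))"
    using fin E_events
    by (intro finite_measure_finite_Union) (auto simp: disjoint_family_on_def E_def)
  also have "\<dots> = (\<Sum>S\<in>\<S>. p ^ card S * (1 - p) ^ (K - card S))"
    unfolding E_def \<S>_def
    by (intro sum.cong refl) (use prob_indices_le_eq[OF indep, of _ a p] cdf in auto)
  also have "\<dots> = (\<Sum>i = j..K. \<Sum>S | S \<in> \<S> \<and> card S = i. p ^ card S * (1 - p) ^ (K - card S))"
    by (rule sum.group[symmetric, OF fin]) (auto simp: \<S>_def dest: card_mono[OF finite_lessThan])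
  also have "\<dots> = binomial_tail K j p"
    unfolding binomial_tail_def Bernstein_def
  proof (intro sum.cong refl)
    fix i assume "i \<in> {j..K}"
    then have "{S. S \<in> \<S> \<and> card S = i} = {S. S \<subseteq> {..<K} \<and> card S = i}"
      by (auto simp: \<S>_def)
    then show "(\<Sum>S | S \<in> \<S> \<and> card S = i. p ^ card S * (1 - p) ^ (K - card S))
        = real (K choose i) * p ^ i * (1 - p) ^ (K - i)"
      by (simp add: n_subsets)
  qed
  finally show ?thesis .
qed

lemma borel_measurable_derivative_on_pos:
  fixes H h :: "real \<Rightarrow> real"
  assumes deriv: "\<And>x. 0 < x \<Longrightarrow> (H has_real_derivative h x) (at x)"
  shows "(\<lambda>x. if 0 < x then h x else 0) \<in> borel_measurable borel"
proof (rule borel_measurable_LIMSEQ_real)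
  let ?u = "\<lambda>n x. indicator {0<..} x *\<^sub>R ((H (x + 1 / Suc n) - H x) / (1 / Suc n))"
  show "?u n \<in> borel_measurable borel" for n
  proof (intro borel_measurable_continuous_on_indicator)
    have "continuous_on {0<..} H"
      using deriv by (intro continuous_at_imp_continuous_on ballI DERIV_isCont) auto
    then show "continuous_on {0<..} (\<lambda>x. (H (x + 1 / Suc n) - H x) / (1 / Suc n))"
      by (intro continuous_intros) (auto elim!: continuous_on_compose2 intro: continuous_intros add_pos_pos)
  qed simp
  show "(\<lambda>n. ?u n x) \<longlonglongrightarrow> (if 0 < x then h x else 0)" for x
  proof (cases "0 < x")
    case True
    have "(\<lambda>n. x + 1 / Suc n) \<longlonglongrightarrow> x + 0"
      by (intro tendsto_add tendsto_const LIMSEQ_Suc[OF lim_const_over_n])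
    then have "filterlim (\<lambda>n. x + 1 / Suc n) (at x) sequentially"
      by (simp add: filterlim_at)
    with deriv[OF True] have "(\<lambda>n. (H (x + 1 / Suc n) - H x) / (x + 1 / Suc n - x)) \<longlonglongrightarrow> h x"
      unfolding has_field_derivative_iff by (rule filterlim_compose)
    then show ?thesis
      using True by simp
  qed simp
qed

lemma DERIV_nonneg_if_right_mono:
  fixes H :: "real \<Rightarrow> real"
  assumes "(H has_real_derivative D) (at x)" and "\<And>y. x \<le> y \<Longrightarrow> H x \<le> H y"
  shows "0 \<le> D"
proof (rule ccontr)
  assume "\<not> 0 \<le> D"
  then obtain d where "d > 0" and "\<And>\<delta>. 0 < \<delta> \<Longrightarrow> \<delta> < d \<Longrightarrow> H (x + \<delta>) < H x"
    using DERIV_neg_dec_right[OF assms(1)] by auto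
  then have "H (x + d / 2) < H x"
    by simp
  with assms(2)[of "x + d / 2"] \<open>d > 0\<close> show False
    by simp
qed

lemma (in prob_space) distributed_of_cdf:
  fixes X :: "'a \<Rightarrow> real" and H h :: "real \<Rightarrow> real"
  assumes X: "X \<in> borel_measurable M"
    and cdf: "\<And>y. prob {\<omega> \<in> space M. X \<omega> \<le> y} = H y"
    and H0: "\<And>y. y \<le> 0 \<Longrightarrow> H y = 0"
    and cont: "continuous_on {0..} H"
    and deriv: "\<And>x. 0 < x \<Longrightarrow> (H has_real_derivative h x) (at x)"
  shows "distributed M lborel X (\<lambda>x. ennreal (if 0 < x then h x else 0))"
proof (rule distributedI_borel_atMost[where g = H])
  let ?f = "\<lambda>x. if 0 < x then h x else 0"
  have mono: "H x \<le> H y" if "x \<le> y" for x y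
    unfolding cdf[symmetric] using X that by (intro finite_measure_mono) auto
  have "0 \<le> h x" if "0 < x" for x
    using deriv[OF that] mono by (rule DERIV_nonneg_if_right_mono)
  then have nonneg: "0 \<le> ?f x" for x
    by simp
  then show "AE x in lborel. 0 \<le> ?f x"
    by simp
  show "?f \<in> borel_measurable borel"
    using deriv by (rule borel_measurable_derivative_on_pos)
  show "(\<integral>\<^sup>+x. ennreal (?f x * indicator {..y} x) \<partial>lborel) = ennreal (H y)" for y
  proof (cases "0 < y")
    case True
    have "(\<integral>\<^sup>+x. ennreal (?f x * indicator {..y} x) \<partial>lborel)
        = (\<integral>\<^sup>+x. ennreal (?f x) * indicator {0..y} x \<partial>lborel)"
      by (intro nn_integral_cong) (simp split: split_indicator)
    also have "\<dots> = ennreal (H y - H 0)"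
    proof (intro nn_integral_has_integral_lebesgue' fundamental_theorem_of_calculus_interior)
      show "continuous_on {0..y} H"
        using cont by (rule continuous_on_subset) auto
      show "(H has_vector_derivative ?f x) (at x)" if "x \<in> {0<..<y}" for x
        using deriv[of x] that by (simp add: has_real_derivative_iff_has_vector_derivative)
    qed (use True nonneg in auto)
    finally show ?thesis
      by (simp add: H0)
  next
    case False
    then have "(\<lambda>x. ennreal (?f x * indicator {..y} x)) = (\<lambda>x. 0)"
      by (auto split: split_indicator)
    then show ?thesis
      using False H0 by simp
  qed
  show "emeasure M {\<omega> \<in> space M. X \<omega> \<le> y} = ennreal (H y)" for y
    using cdf by (simp add: emeasure_eq_measure)
qed (rule X)

lemma (in prob_space) distributed_order_stat:
  fixes X :: "nat \<Rightarrow> 'a \<Rightarrow> real" and G g :: "real \<Rightarrow> real"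
  assumes indep: "indep_vars (\<lambda>_. borel) X {..<K}"
    and nonneg: "\<And>k \<omega>. k < K \<Longrightarrow> \<omega> \<in> space M \<Longrightarrow> 0 \<le> X k \<omega>"
    and cdf: "\<And>k y. k < K \<Longrightarrow> 0 \<le> y \<Longrightarrow> prob {\<omega> \<in> space M. X k \<omega> \<le> y} = G y"
    and G0: "G 0 = 0"
    and cont: "continuous_on {0..} G"
    and deriv: "\<And>x. 0 < x \<Longrightarrow> (G has_real_derivative g x) (at x)"
    and j: "1 \<le> j" "j \<le> K"
  shows "distributed M lborel (\<lambda>\<omega>. order_stat K (\<lambda>k. X k \<omega>) j)
           (\<lambda>x. ennreal (if 0 < x then fact K / (fact (j - 1) * fact (K - j))
                                     * g x * G x ^ (j - 1) * (1 - G x) ^ (K - j) else 0))"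
proof (rule distributed_of_cdf)
  \<comment> \<open>G is prescribed on [0, oo) only; as the X k are nonnegative, G (max 0 y) is their cdf.\<close>
  let ?H = "\<lambda>y. binomial_tail K j (G (max 0 y))"
  have cdf': "prob {\<omega> \<in> space M. X k \<omega> \<le> y} = G (max 0 y)" if "k < K" for k y
  proof (cases "0 \<le> y")
    case False
    then have empty: "{\<omega> \<in> space M. X k \<omega> \<le> y} = {}"
      using nonneg[OF that] by force
    show ?thesis
      using False G0 by (simp add: empty)
  qed (simp add: cdf that)
  show "prob {\<omega> \<in> space M. order_stat K (\<lambda>k. X k \<omega>) j \<le> y} = ?H y" for y
    using indep cdf' j by (rule prob_order_stat_le)
  show "(\<lambda>\<omega>. order_stat K (\<lambda>k. X k \<omega>) j) \<in> borel_measurable M"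
    using indep j by (intro borel_measurable_order_stat) (auto simp: indep_vars_def2)
  show "?H y = 0" if "y \<le> 0" for y
    using that G0 j by (simp add: max_absorb1 binomial_tail_0)
  have "continuous_on UNIV (binomial_tail K j)"
    by (intro continuous_at_imp_continuous_on ballI DERIV_isCont[OF has_real_derivative_binomial_tail[OF j]])
  then have "continuous_on {0..} (\<lambda>y. binomial_tail K j (G y))"
    using cont by (rule continuous_on_compose2) simp
  moreover have "continuous_on {0..} ?H \<longleftrightarrow> continuous_on {0..} (\<lambda>y. binomial_tail K j (G y))"
    by (intro continuous_on_cong) auto
  ultimately show "continuous_on {0..} ?H"
    by simp
  show "(?H has_real_derivative fact K / (fact (j - 1) * fact (K - j))
                                     * g x * G x ^ (j - 1) * (1 - G x) ^ (K - j)) (at x)"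
    if "0 < x" for x
  proof (rule has_field_derivative_transform_within_open[where S = "{0<..}"])
    show "((\<lambda>y. binomial_tail K j (G y)) has_real_derivative fact K / (fact (j - 1) * fact (K - j))
                                     * g x * G x ^ (j - 1) * (1 - G x) ^ (K - j)) (at x)"
      using DERIV_chain2[OF has_real_derivative_binomial_tail[OF j] deriv[OF that]]
      by (simp add: mult_ac)
  qed (use that in auto)
qed

section \<open>The user model\<close>

lemma lower_gamma_2:
  assumes "0 \<le> x"
  shows "lower_gamma 2 x = 1 - (1 + x) * exp (- x)"
proof -
  have "lower_gamma 2 x = (LBINT t=ereal 0..ereal x. t * exp (- t))"
    unfolding lower_gamma_def zero_ereal_def[symmetric] using assms
    by (intro interval_integral_cong) (auto simp: einterval_iff min_def max_def)
  also have "\<dots> = - (1 + x) * exp (- x) - - (1 + 0) * exp (- 0)"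
  proof (rule interval_integral_FTC_finite)
    show "continuous_on {min 0 x..max 0 x} (\<lambda>t. t * exp (- t))"
      by (intro continuous_intros)
    show "((\<lambda>t. - (1 + t) * exp (- t)) has_vector_derivative t * exp (- t)) (at t within {min 0 x..max 0 x})"
      for t :: real
      by (auto intro!: derivative_eq_intros simp: has_real_derivative_iff_has_vector_derivative[symmetric]
          algebra_simps)
  qed
  finally show ?thesis
    by (simp add: algebra_simps)
qed

lemma lower_gamma_2_pos:
  assumes "0 < x"
  shows "0 < lower_gamma 2 x"
proof -
  have "1 + x < 1 + x + x\<^sup>2 / 2"
    using assms by simp
  also have "\<dots> \<le> exp x"
    using assms by (intro exp_lower_Taylor_quadratic) simp
  finally have "(1 + x) * exp (- x) < 1"
    by (simp add: exp_minus field_simps)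
  then show ?thesis
    using assms by (simp add: lower_gamma_2)
qed

lemma pos_density_nonneg:
  assumes "0 < \<phi>" "0 < R" "0 < \<Delta>"
  shows "0 \<le> pos_density \<phi> R \<Delta> \<theta>bar r \<theta>"
  unfolding pos_density_def using assms lower_gamma_2_pos[of "R * \<phi>"]
  by (auto split: split_indicator)

lemma borel_measurable_pos_density [measurable]:
  "(\<lambda>p. pos_density \<phi> R \<Delta> \<theta>bar (fst p) (snd p)) \<in> borel_measurable (lborel \<Otimes>\<^sub>M lborel)"
  unfolding pos_density_def by measurable

lemma integrable_pos_density:
  "integrable (lborel \<Otimes>\<^sub>M lborel) (\<lambda>p. pos_density \<phi> R \<Delta> \<theta>bar (fst p) (snd p))"
proof -
  have "integrable lborel (\<lambda>p. indicator ({0..R} \<times> {\<theta>bar - \<Delta>..\<theta>bar + \<Delta>}) p *\<^sub>R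
      (\<phi>\<^sup>2 * exp (- \<phi> * fst p) * fst p))"
    by (intro borel_integrable_compact compact_Times compact_Icc continuous_intros)
  then have "integrable lborel (\<lambda>p. indicator ({0..R} \<times> {\<theta>bar - \<Delta>..\<theta>bar + \<Delta>}) p *\<^sub>R
      (\<phi>\<^sup>2 * exp (- \<phi> * fst p) * fst p) / (2 * \<Delta> * lower_gamma 2 (R * \<phi>)))"
    by (rule integrable_divide_zero)
  then show ?thesis
    by (simp add: lborel_prod pos_density_def)
qed

lemma Fpi_eq_integral:
  assumes "lam \<noteq> 0" "0 \<le> R" "0 \<le> \<Delta>" "0 \<le> y"
  shows "Fpi M \<alpha> \<phi> lam R \<Delta> \<theta>bar y = (\<integral>p. pos_density \<phi> R \<Delta> \<theta>bar (fst p) (snd p)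
            * (1 - exp (- (y * attenuation M \<alpha> \<theta>bar (fst p) (snd p)))) \<partial>(lborel \<Otimes>\<^sub>M lborel))"
proof -
  let ?I = "\<lambda>r t. (1 - exp (- (y * (1 + r powr \<alpha>) / fejer M (pi * (\<theta>bar - t)))))
        * (lam * \<phi>\<^sup>2 * exp (- \<phi> * r) / (2 * \<Delta> * lam * lower_gamma 2 (R * \<phi>))) * r"
  let ?f = "\<lambda>r t. pos_density \<phi> R \<Delta> \<theta>bar r t * (1 - exp (- (y * attenuation M \<alpha> \<theta>bar r t)))"
  have "Fpi M \<alpha> \<phi> lam R \<Delta> \<theta>bar y
      = (LBINT t. indicator {\<theta>bar - \<Delta>..\<theta>bar + \<Delta>} t * (LBINT r. indicator {0..R} r * ?I r t))"
    using assms by (simp add: Fpi_def interval_integral_Icc set_lebesgue_integral_def zero_ereal_def)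
  also have "\<dots> = (LBINT t. LBINT r. ?f r t)"
    using assms(1)
    by (intro Bochner_Integration.integral_cong refl)
       (auto simp: pos_density_def attenuation_def indicator_times mult_ac split: split_indicator)
  also have "\<dots> = (\<integral>(r, t). ?f r t \<partial>(lborel \<Otimes>\<^sub>M lborel))"
    using integrable_mult_one_minus_exp[OF integrable_pos_density _ attenuation_nonneg assms(4)]
    by (intro lborel_pair.integral_snd) (simp_all add: split_beta')
  finally show ?thesis
    by (simp add: split_beta')
qed

lemma prob_gain_le:
  fixes P :: "'w measure"
  assumes P: "prob_space P"
    and pos: "1 \<le> M" "0 < \<phi>" "0 < lam" "0 < R" "0 < \<Delta>" and y: "0 \<le> y"
    and law: "distributed P (lborel :: ((real \<times> real) \<times> complex) measure) (\<lambda>\<omega>. ((r \<omega>, \<theta> \<omega>), a \<omega>))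
        (\<lambda>((x, t), z). ennreal (pos_density \<phi> R \<Delta> \<theta>bar x t * cn_density z))"
  shows "measure P {\<omega> \<in> space P. gain M \<alpha> \<theta>bar (r \<omega>) (\<theta> \<omega>) (a \<omega>) \<le> y} = Fpi M \<alpha> \<phi> lam R \<Delta> \<theta>bar y"
proof -
  interpret prob_space P
    by (rule P)
  let ?f = "\<lambda>p. pos_density \<phi> R \<Delta> \<theta>bar (fst p) (snd p)
              * (1 - exp (- (y * attenuation M \<alpha> \<theta>bar (fst p) (snd p))))"
  have nonneg: "0 \<le> ?f p" for p
    using pos y attenuation_nonneg by (simp add: pos_density_nonneg)
  have "emeasure P {\<omega> \<in> space P. gain M \<alpha> \<theta>bar (r \<omega>) (\<theta> \<omega>) (a \<omega>) \<le> y}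
      = (\<integral>\<^sup>+p. ennreal (?f p) \<partial>(lborel \<Otimes>\<^sub>M lborel))"
    using pos y law by (intro emeasure_gain_le) (auto simp: pos_density_nonneg)
  also have "\<dots> = ennreal (\<integral>p. ?f p \<partial>(lborel \<Otimes>\<^sub>M lborel))"
    using integrable_mult_one_minus_exp[OF integrable_pos_density _ attenuation_nonneg y] nonneg
    by (intro nn_integral_eq_integral) auto
  also have "\<dots> = ennreal (Fpi M \<alpha> \<phi> lam R \<Delta> \<theta>bar y)"
    using pos y by (simp add: Fpi_eq_integral)
  finally show ?thesis
    using nonneg pos y
    by (simp add: emeasure_eq_measure Fpi_eq_integral Bochner_Integration.integral_nonneg)
qed

lemma Fpi_0: "Fpi M \<alpha> \<phi> lam R \<Delta> \<theta>bar 0 = 0"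
  by (simp add: Fpi_def)

lemma continuous_on_Fpi:
  assumes "lam \<noteq> 0" "0 \<le> R" "0 \<le> \<Delta>"
  shows "continuous_on {0..} (Fpi M \<alpha> \<phi> lam R \<Delta> \<theta>bar)"
  using continuous_on_integral_one_minus_exp[OF integrable_pos_density _ attenuation_nonneg]
  by (rule continuous_on_cong[THEN iffD1, OF refl, rotated]) (use assms in \<open>simp_all add: Fpi_eq_integral\<close>)

lemma Fpi_has_real_derivative:
  assumes "lam \<noteq> 0" "0 \<le> R" "0 \<le> \<Delta>" "0 < y"
  shows "(Fpi M \<alpha> \<phi> lam R \<Delta> \<theta>bar has_real_derivative
      (\<integral>p. pos_density \<phi> R \<Delta> \<theta>bar (fst p) (snd p) * (attenuation M \<alpha> \<theta>bar (fst p) (snd p)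
             * exp (- (y * attenuation M \<alpha> \<theta>bar (fst p) (snd p)))) \<partial>(lborel \<Otimes>\<^sub>M lborel))) (at y)"
  using has_real_derivative_integral_one_minus_exp[OF integrable_pos_density _ attenuation_nonneg assms(4)]
  by (rule has_field_derivative_transform_within_open[where S = "{0<..}"])
     (use assms in \<open>auto simp: Fpi_eq_integral\<close>)

theorem lemma1:
  fixes P :: "'w measure"
    and M K j :: nat
    and \<alpha> \<phi> lam R \<Delta> \<theta>bar :: real
    and r \<theta> :: "nat \<Rightarrow> 'w \<Rightarrow> real"
    and a :: "nat \<Rightarrow> 'w \<Rightarrow> complex"
  assumes "prob_space P"
    and "M \<ge> 1" and "\<alpha> > 0" and "\<phi> > 0" and "lam > 0" and "R > 0" and "\<Delta> > 0"
    and "K \<ge> 1" and "1 \<le> j" and "j \<le> K"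
    and users_indep:
      "prob_space.indep_vars P (\<lambda>_. lborel) (\<lambda>k \<omega>. ((r k \<omega>, \<theta> k \<omega>), a k \<omega>)) {..<K}"
    and users_law: "\<And>k. k < K \<Longrightarrow>
      distributed P (lborel :: ((real \<times> real) \<times> complex) measure)
        (\<lambda>\<omega>. ((r k \<omega>, \<theta> k \<omega>), a k \<omega>))
        (\<lambda>((x, t), z). ennreal (pos_density \<phi> R \<Delta> \<theta>bar x t * cn_density z))"
  shows "distributed P lborel
           (\<lambda>\<omega>. order_stat K (\<lambda>k. gain M \<alpha> \<theta>bar (r k \<omega>) (\<theta> k \<omega>) (a k \<omega>)) j)
           (\<lambda>z. ennreal (if z > 0 then
               fact K / (fact (j - 1) * fact (K - j))
               * deriv (Fpi M \<alpha> \<phi> lam R \<Delta> \<theta>bar) z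
               * (Fpi M \<alpha> \<phi> lam R \<Delta> \<theta>bar z) ^ (j - 1)
               * (1 - Fpi M \<alpha> \<phi> lam R \<Delta> \<theta>bar z) ^ (K - j)
             else 0))"
proof -
  interpret prob_space P by fact
  let ?F = "Fpi M \<alpha> \<phi> lam R \<Delta> \<theta>bar"
  have "indep_vars (\<lambda>_. borel) (\<lambda>k \<omega>. gain M \<alpha> \<theta>bar (r k \<omega>) (\<theta> k \<omega>) (a k \<omega>)) {..<K}"
    using indep_vars_compose2[OF users_indep, where Y = "\<lambda>_ v. gain M \<alpha> \<theta>bar (fst (fst v)) (snd (fst v)) (snd v)"]
      borel_measurable_gain[OF \<open>M \<ge> 1\<close>] by (simp add: lborel_prod)
  moreover have "prob {\<omega> \<in> space P. gain M \<alpha> \<theta>bar (r k \<omega>) (\<theta> k \<omega>) (a k \<omega>) \<le> y} = ?F y"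
    if "k < K" "0 \<le> y" for k y
    using assms that by (intro prob_gain_le users_law) auto
  moreover have "(?F has_real_derivative deriv ?F x) (at x)" if "0 < x" for x
    using Fpi_has_real_derivative[of lam R \<Delta> x M \<alpha> \<phi> \<theta>bar] assms that
    by (auto simp: DERIV_deriv_iff_real_differentiable real_differentiable_def)
  ultimately show ?thesis
    using assms continuous_on_Fpi[of lam R \<Delta>]
    by (intro distributed_order_stat) (auto simp: gain_nonneg Fpi_0)
qed

end
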